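(* Let $n\ge 3$ and let $D_n=\langle \rho,\tau \mid \rho^n=\tau^2=1,\ \tau\rho\tau=\rho^{-1}\rangle$ be the dihedral group of order $2n$. Let $0<i<j<n$ and $X=\mathrm{Cay}(D_n;\{\tau,\rho^i\tau,\rho^j\tau\})$. Then $X$ is connected if and only if $\gcd(n,i,j)=1$. Moreover, if $\gcd(n,i,j)=1$ and $m=\gcd(n,i)$, then $X$ is isomorphic to the honeycomb toroidal graph $\mathrm{HTG}(m,2n/m,\ell)$ for some integer $\ell$.
   Context: For a finite group $G$ and $S\subset G$ with $1\notin S$ and $S=S^{-1}$, the Cayley graph $\mathrm{Cay}(G;S)$ has vertex set $G$, with $g$ adjacent to $h$ iff $h=gs$ for some $s\in S$. Honeycomb toroidal graph: let $m\ge 1$ be an integer, $n'\ge 4$ an even integer, and $\ell$ an integer with $\ell\equiv m \pmod 2$. The graph $\mathrm{HTG}(m,n',\ell)$ has vertex set $\{u_{a,b}: 0\le a\le m-1,\ b\in\mathbb{Z}_{n'}\}$ and edges: vertical edges $u_{a,b}u_{a,b+1}$ for all $a,b$; flat edges $u_{a,b}u_{a+1,b}$ for $0\le a\le m-2$ and all $b$ with $a+b$ odd; jump edges $u_{m-1,b}u_{0,b+\ell}$ for all $b$ with $b\equiv m\pmod 2$ (second subscripts modulo $n'$). *)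

theory Defs
  imports "HOL-Algebra.Group"
begin

text \<open>Dihedral group of order 2n: element (k, e) stands for rho^k tau^e,
  with k in {0..<n} and e = True meaning a factor tau.
  Multiplication: rho^a tau^e * rho^b tau^f = rho^(a + (-1)^e b) tau^(e xor f).\<close>
definition dihedral :: "nat \<Rightarrow> (int \<times> bool) monoid" where
  "dihedral n = \<lparr> carrier = {0..<int n} \<times> UNIV,
     mult = (\<lambda>(a, e) (b, f). ((a + (if e then - b else b)) mod int n, e \<noteq> f)),
     one = (0, False) \<rparr>"

definition drho :: "int \<times> bool" where "drho = (1, False)"
definition dtau :: "int \<times> bool" where "dtau = (0, True)"

definition cayley_adj :: "('a, 'b) monoid_scheme \<Rightarrow> 'a set \<Rightarrow> 'a \<Rightarrow> 'a \<Rightarrow> bool" where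
  "cayley_adj G S g h \<longleftrightarrow> g \<in> carrier G \<and> h \<in> carrier G \<and> (\<exists>s\<in>S. h = g \<otimes>\<^bsub>G\<^esub> s)"

definition graph_connected :: "'a set \<Rightarrow> ('a \<Rightarrow> 'a \<Rightarrow> bool) \<Rightarrow> bool" where
  "graph_connected V E \<longleftrightarrow>
     (\<forall>x\<in>V. \<forall>y\<in>V. (\<lambda>a b. a \<in> V \<and> b \<in> V \<and> E a b)\<^sup>*\<^sup>* x y)"

definition graph_iso :: "'a set \<Rightarrow> ('a \<Rightarrow> 'a \<Rightarrow> bool) \<Rightarrow> 'b set \<Rightarrow> ('b \<Rightarrow> 'b \<Rightarrow> bool) \<Rightarrow> bool" where
  "graph_iso V1 E1 V2 E2 \<longleftrightarrow>
     (\<exists>f. bij_betw f V1 V2 \<and> (\<forall>x\<in>V1. \<forall>y\<in>V1. E1 x y \<longleftrightarrow> E2 (f x) (f y)))"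

text \<open>Honeycomb toroidal graph HTG(m, n', l): vertex u_{a,b} is (a, b) with
  0 \<le> a \<le> m-1 and b in {0..<n'} (second subscripts taken mod n').\<close>
definition htg_verts :: "int \<Rightarrow> int \<Rightarrow> (int \<times> int) set" where
  "htg_verts m n' = {0..<m} \<times> {0..<n'}"

definition htg_edge :: "int \<Rightarrow> int \<Rightarrow> int \<Rightarrow> int \<times> int \<Rightarrow> int \<times> int \<Rightarrow> bool" where
  "htg_edge m n' l x y \<longleftrightarrow> x \<in> htg_verts m n' \<and> y \<in> htg_verts m n' \<and>
     ( \<comment> \<open>vertical edges\<close>
       (fst y = fst x \<and> snd y = (snd x + 1) mod n')
       \<comment> \<open>flat edges\<close>
     \<or> (fst x \<le> m - 2 \<and> odd (fst x + snd x) \<and> fst y = fst x + 1 \<and> snd y = snd x)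
       \<comment> \<open>jump edges\<close>
     \<or> (fst x = m - 1 \<and> snd x mod 2 = m mod 2 \<and> fst y = 0 \<and> snd y = (snd x + l) mod n'))"

definition htg_adj :: "int \<Rightarrow> int \<Rightarrow> int \<Rightarrow> int \<times> int \<Rightarrow> int \<times> int \<Rightarrow> bool" where
  "htg_adj m n' l x y \<longleftrightarrow> htg_edge m n' l x y \<or> htg_edge m n' l y x"

end

theory Submission
  imports Defs "HOL-Number_Theory.Cong"
begin

text \<open>Multiplying by a reflection rho^c tau changes the rotation index by \<plusminus>c, so for
  C = {0, i, j} the rotation index modulo gcd(n, i, j) is constant along walks; conversely
  rho^c = (rho^c tau) tau, and Bezout writes every rotation as a combination of rho^i and rho^j.
  For the isomorphism, u_{a,b} is labelled by rho^(-a j - floor((b - a)/2) i) tau^(a + b): the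
  three kinds of HTG edges become multiplication by the three reflections (for the jump edges
  this fixes l = 2s - m with s i = m j mod n), the labelling is injective because gcd(m, j) = 1
  and gcd(n/m, i/m) = 1, and both vertex sets have 2n elements.\<close>

definition graph_reachable :: "'a set \<Rightarrow> ('a \<Rightarrow> 'a \<Rightarrow> bool) \<Rightarrow> 'a \<Rightarrow> 'a \<Rightarrow> bool" where
  "graph_reachable V E = (\<lambda>a b. a \<in> V \<and> b \<in> V \<and> E a b)\<^sup>*\<^sup>*"

lemma graph_connected_iff_reachable:
  "graph_connected V E \<longleftrightarrow> (\<forall>x\<in>V. \<forall>y\<in>V. graph_reachable V E x y)"
  by (simp add: graph_connected_def graph_reachable_def)

lemma graph_reachable_edge:
  "x \<in> V \<Longrightarrow> y \<in> V \<Longrightarrow> E x y \<Longrightarrow> graph_reachable V E x y"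
  by (simp add: graph_reachable_def r_into_rtranclp)

lemma graph_reachable_trans [trans]:
  "graph_reachable V E x y \<Longrightarrow> graph_reachable V E y z \<Longrightarrow> graph_reachable V E x z"
  unfolding graph_reachable_def by (rule rtranclp_trans)

lemma graph_connectedI_root:
  assumes "symp E" and "\<And>y. y \<in> V \<Longrightarrow> graph_reachable V E x\<^sub>0 y"
  shows "graph_connected V E"
proof -
  have "symp (graph_reachable V E)"
    unfolding graph_reachable_def
    by (rule symp_rtranclp) (use assms(1) in \<open>auto simp: symp_def\<close>)
  then show ?thesis
    using assms(2) unfolding graph_connected_iff_reachable graph_reachable_def
    by (meson rtranclp_trans sympD)
qed

lemma graph_iso_via_inverse:
  assumes "bij_betw g V\<^sub>2 V\<^sub>1"
    and "\<And>u v. u \<in> V\<^sub>2 \<Longrightarrow> v \<in> V\<^sub>2 \<Longrightarrow> E\<^sub>1 (g u) (g v) \<longleftrightarrow> E\<^sub>2 u v"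
  shows "graph_iso V\<^sub>1 E\<^sub>1 V\<^sub>2 E\<^sub>2"
  unfolding graph_iso_def
proof (intro exI conjI ballI)
  let ?f = "the_inv_into V\<^sub>2 g"
  show bij: "bij_betw ?f V\<^sub>1 V\<^sub>2"
    using assms(1) by (rule bij_betw_the_inv_into)
  fix x y assume "x \<in> V\<^sub>1" "y \<in> V\<^sub>1"
  moreover from this have "?f x \<in> V\<^sub>2" "?f y \<in> V\<^sub>2"
    using bij by (auto dest: bij_betwE)
  ultimately show "E\<^sub>1 x y \<longleftrightarrow> E\<^sub>2 (?f x) (?f y)"
    using assms f_the_inv_into_f_bij_betw[OF assms(1)] by metis
qed

lemma bezout3_int:
  fixes a b c :: int
  assumes "gcd a (gcd b c) = 1"
  shows "\<exists>u v w. u * a + v * b + w * c = 1"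
proof -
  obtain u v where uv: "u * a + v * gcd b c = 1"
    using bezout_int[of a "gcd b c"] assms by auto
  obtain v' w' where vw: "v' * b + w' * c = gcd b c"
    using bezout_int[of b c] by auto
  have "u * a + (v * v') * b + (v * w') * c = u * a + v * (v' * b + w' * c)"
    by (simp add: algebra_simps)
  with uv vw show ?thesis by metis
qed

text \<open>Natural coefficients, because a walk repeats a step a natural number of times.\<close>
lemma bezout3_mod_nat_coeffs:
  fixes c\<^sub>1 c\<^sub>2 x :: int
  assumes "n > 0" and "gcd (int n) (gcd c\<^sub>1 c\<^sub>2) = 1"
  shows "\<exists>p q :: nat. [int p * c\<^sub>1 + int q * c\<^sub>2 = x] (mod int n)"
proof -
  obtain u v w where uvw: "u * int n + v * c\<^sub>1 + w * c\<^sub>2 = 1"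
    using bezout3_int[OF assms(2)] by blast
  define p where "p = nat ((x * v) mod int n)"
  define q where "q = nat ((x * w) mod int n)"
  have "[int p * c\<^sub>1 + int q * c\<^sub>2 = (x * v) * c\<^sub>1 + (x * w) * c\<^sub>2] (mod int n)"
  proof -
    have "[int p = x * v] (mod int n)" "[int q = x * w] (mod int n)"
      using assms(1) by (simp_all add: p_def q_def cong_def)
    then show ?thesis by (intro cong_add cong_mult cong_refl)
  qed
  also have "[(x * v) * c\<^sub>1 + (x * w) * c\<^sub>2 = x] (mod int n)"
  proof -
    have "x = (x * v) * c\<^sub>1 + (x * w) * c\<^sub>2 + (x * u) * int n"
      using arg_cong[OF uvw, of "(*) x"] by (simp add: algebra_simps)
    then show ?thesis by (metis cong_add_lcancel_0 cong_mult_self_right cong_sym)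
  qed
  finally show ?thesis by blast
qed

lemma dihedral_carrier: "carrier (dihedral n) = {0..<int n} \<times> UNIV"
  by (simp add: dihedral_def)

lemma dihedral_mult:
  "(a, e) \<otimes>\<^bsub>dihedral n\<^esub> (b, f) = ((a + (if e then - b else b)) mod int n, e \<noteq> f)"
  by (simp add: dihedral_def)

lemma dihedral_drho_pow: "drho [^]\<^bsub>dihedral n\<^esub> k = (int k mod int n, False)"
proof (induction k)
  case 0
  then show ?case by (simp add: dihedral_def)
next
  case (Suc k)
  then show ?case by (simp add: dihedral_mult drho_def mod_add_right_eq add.commute)
qed

lemma dihedral_reflection_involutive:
  assumes "x \<in> carrier (dihedral n)"
  shows "(x \<otimes>\<^bsub>dihedral n\<^esub> (c, True)) \<otimes>\<^bsub>dihedral n\<^esub> (c, True) = x"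
proof -
  obtain y e where x: "x = (y, e)" "0 \<le> y" "y < int n"
    using assms by (auto simp: dihedral_carrier)
  then show ?thesis
    by (cases e) (simp_all add: dihedral_mult mod_add_left_eq mod_diff_left_eq)
qed

lemma dihedral_reflection_swap:
  assumes "x \<in> carrier (dihedral n)" and "y = x \<otimes>\<^bsub>dihedral n\<^esub> (c, True)"
  shows "x = y \<otimes>\<^bsub>dihedral n\<^esub> (c, True)"
  using assms by (simp add: dihedral_reflection_involutive)

definition reflections :: "int set \<Rightarrow> (int \<times> bool) set" where
  "reflections C = (\<lambda>c. (c, True)) ` C"

lemma cayley_adj_reflections_iff:
  "cayley_adj (dihedral n) (reflections C) x y \<longleftrightarrow>
     x \<in> carrier (dihedral n) \<and> y \<in> carrier (dihedral n) \<and>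
     (\<exists>c\<in>C. y = x \<otimes>\<^bsub>dihedral n\<^esub> (c, True))"
  by (auto simp: cayley_adj_def reflections_def)

lemma symp_cayley_adj_reflections: "symp (cayley_adj (dihedral n) (reflections C))"
proof (rule sympI)
  fix x y assume "cayley_adj (dihedral n) (reflections C) x y"
  then obtain c where "c \<in> C" "y = x \<otimes>\<^bsub>dihedral n\<^esub> (c, True)"
    and "x \<in> carrier (dihedral n)" "y \<in> carrier (dihedral n)"
    by (auto simp: cayley_adj_reflections_iff)
  moreover from \<open>x \<in> carrier (dihedral n)\<close> \<open>y = x \<otimes>\<^bsub>dihedral n\<^esub> (c, True)\<close>
  have "x = y \<otimes>\<^bsub>dihedral n\<^esub> (c, True)"
    by (rule dihedral_reflection_swap)
  ultimately show "cayley_adj (dihedral n) (reflections C) y x"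
    by (auto simp: cayley_adj_reflections_iff)
qed

lemma cayley_reachable_reflection:
  assumes "x \<in> carrier (dihedral n)" and "c \<in> C"
  shows "graph_reachable (carrier (dihedral n)) (cayley_adj (dihedral n) (reflections C))
           x (x \<otimes>\<^bsub>dihedral n\<^esub> (c, True))"
proof -
  have "x \<otimes>\<^bsub>dihedral n\<^esub> (c, True) \<in> carrier (dihedral n)"
    using assms(1) by (cases x) (auto simp: dihedral_carrier dihedral_mult)
  with assms show ?thesis
    by (intro graph_reachable_edge) (auto simp: cayley_adj_reflections_iff)
qed

lemma reflection_cayley_reachable_rotation:
  assumes "n > 0" and "0 \<in> C" and "c \<in> C" and "x \<in> {0..<int n}"
  shows "graph_reachable (carrier (dihedral n)) (cayley_adj (dihedral n) (reflections C))
           (x, False) ((x + int p * c) mod int n, False)"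
proof (induction p)
  case 0
  show ?case using assms(4) by (simp add: graph_reachable_def)
next
  case (Suc p)
  let ?reach = "graph_reachable (carrier (dihedral n)) (cayley_adj (dihedral n) (reflections C))"
  define y where "y = (x + int p * c) mod int n"
  have y: "(y, False) \<in> carrier (dihedral n)"
    using assms(1) by (simp add: y_def dihedral_carrier)
  have "?reach (x, False) (y, False)"
    using Suc.IH by (simp add: y_def)
  also have "?reach \<dots> ((y, False) \<otimes>\<^bsub>dihedral n\<^esub> (c, True))"
    using y assms(3) by (rule cayley_reachable_reflection)
  also have "?reach \<dots> (((y, False) \<otimes>\<^bsub>dihedral n\<^esub> (c, True)) \<otimes>\<^bsub>dihedral n\<^esub> (0, True))"
    using y assms(2) by (intro cayley_reachable_reflection) (auto simp: dihedral_carrier dihedral_mult)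
  also have "((y, False) \<otimes>\<^bsub>dihedral n\<^esub> (c, True)) \<otimes>\<^bsub>dihedral n\<^esub> (0, True)
      = ((x + int (Suc p) * c) mod int n, False)"
    by (simp add: dihedral_mult y_def mod_add_right_eq algebra_simps)
  finally show ?case .
qed

lemma reflection_cayley_connected:
  assumes "n > 0" and "0 \<in> C" and "c\<^sub>1 \<in> C" and "c\<^sub>2 \<in> C"
    and "gcd (int n) (gcd c\<^sub>1 c\<^sub>2) = 1"
  shows "graph_connected (carrier (dihedral n)) (cayley_adj (dihedral n) (reflections C))"
proof (rule graph_connectedI_root[OF symp_cayley_adj_reflections])
  let ?reach = "graph_reachable (carrier (dihedral n)) (cayley_adj (dihedral n) (reflections C))"
  fix y assume y: "y \<in> carrier (dihedral n)"
  then obtain x e where xe: "y = (x, e)" and x: "x \<in> {0..<int n}"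
    by (auto simp: dihedral_carrier)
  obtain p q :: nat where pq: "[int p * c\<^sub>1 + int q * c\<^sub>2 = x] (mod int n)"
    using bezout3_mod_nat_coeffs[OF assms(1,5)] by blast
  define x' where "x' = (int p * c\<^sub>1) mod int n"
  have "?reach (0, False) (x', False)"
    using reflection_cayley_reachable_rotation[OF assms(1,2,3), of 0 p] assms(1)
    by (simp add: x'_def)
  also have "?reach \<dots> ((x' + int q * c\<^sub>2) mod int n, False)"
    using assms(1) by (intro reflection_cayley_reachable_rotation assms) (simp add: x'_def)
  also have "(x' + int q * c\<^sub>2) mod int n = x"
    using pq x by (simp add: x'_def cong_def mod_add_left_eq)
  finally have reach_x: "?reach (0, False) (x, False)" .
  show "?reach (0, False) y"
  proof (cases e)
    case True
    have "?reach (x, False) ((x, False) \<otimes>\<^bsub>dihedral n\<^esub> (0, True))"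
      using x assms(2) by (intro cayley_reachable_reflection) (auto simp: dihedral_carrier)
    with reach_x x show ?thesis
      using True xe by (auto simp: dihedral_mult dest: graph_reachable_trans)
  qed (use reach_x xe in simp)
qed

lemma reflection_cayley_reachable_mod:
  assumes "graph_reachable (carrier (dihedral n)) (cayley_adj (dihedral n) (reflections C)) a b"
    and "d dvd int n" and "\<forall>c\<in>C. d dvd c"
  shows "fst a mod d = fst b mod d"
  using assms(1) unfolding graph_reachable_def
proof (induction rule: rtranclp_induct)
  case (step b b')
  obtain x e where "b = (x, e)" by fastforce
  moreover obtain c where "c \<in> C" "b' = b \<otimes>\<^bsub>dihedral n\<^esub> (c, True)"
    using step.hyps(2) by (auto simp: cayley_adj_reflections_iff)
  moreover from \<open>c \<in> C\<close> have "d dvd c" using assms(3) by blast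
  ultimately have "fst b' mod d = fst b mod d"
    using assms(2) by (auto simp: dihedral_mult mod_mod_cancel mod_eq_dvd_iff)
  with step.IH show ?case by simp
qed simp

lemma reflection_cayley_connected_imp_dvd_one:
  assumes "graph_connected (carrier (dihedral n)) (cayley_adj (dihedral n) (reflections C))"
    and "n > 1" and "d dvd int n" and "\<forall>c\<in>C. d dvd c"
  shows "d dvd 1"
proof -
  have "graph_reachable (carrier (dihedral n)) (cayley_adj (dihedral n) (reflections C))
      (0, False) (1, False)"
    using assms(1,2) by (auto simp: graph_connected_iff_reachable dihedral_carrier)
  from reflection_cayley_reachable_mod[OF this assms(3,4)] show ?thesis
    by (simp add: mod_eq_0_iff_dvd)
qed

locale dihedral_htg =
  fixes n i j :: nat
  assumes n_pos: "0 < n" and gcd_eq_1: "gcd n (gcd i j) = 1"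
begin

definition m :: int where "m = int (gcd n i)"
definition q :: int where "q = int n div m"
definition n' :: int where "n' = 2 * q"

text \<open>From Bezout for n and i: s i = m j (mod n), which makes the jump edges work.\<close>
definition s :: int where "s = snd (bezw n i) * int j"
definition ell :: int where "ell = 2 * s - m"

text \<open>Going up a column multiplies alternately by tau and rho^i tau, a flat edge by rho^j tau.\<close>
definition htg_label :: "int \<times> int \<Rightarrow> int \<times> bool" where
  "htg_label = (\<lambda>(a, b). ((- a * int j - ((b - a) div 2) * int i) mod int n, odd (a + b)))"

lemma n'_eq: "n' = int (2 * n div gcd n i)"
  by (simp add: n'_def q_def m_def zdiv_int div_mult_swap)

lemma m_pos: "m > 0"
  using n_pos by (simp add: m_def)

lemma n_eq: "int n = m * q"
  by (simp add: m_def q_def)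

lemma q_pos: "q > 0"
  using zero_less_mult_pos[of m q] n_eq n_pos m_pos by simp

lemma n'_pos: "n' > 0"
  using q_pos by (simp add: n'_def)

lemma m_dvd_i: "m dvd int i"
  by (simp add: m_def)

lemma coprime_m_j: "coprime m (int j)"
proof -
  have "gcd m (int j) = int (gcd (gcd n i) j)"
    by (simp add: m_def)
  then show ?thesis
    using gcd_eq_1 by (simp add: coprime_iff_gcd_eq_1 gcd.assoc)
qed

lemma coprime_q_i_div_m: "coprime q (int i div m)"
  using div_gcd_coprime[of "int n" "int i"] n_pos by (simp add: q_def m_def)

lemma q_mult_i: "q * int i = int n * (int i div m)"
  using m_dvd_i n_eq by (metis dvd_div_mult_self mult.assoc mult.commute)

lemma s_mult_i_cong: "int n dvd s * int i - m * int j"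
proof -
  have "s * int i - m * int j = int n * (- fst (bezw n i) * int j)"
    by (simp add: s_def m_def bezw_aux algebra_simps)
  then show ?thesis by simp
qed

lemma ell_parity: "ell mod 2 = m mod 2"
  by (simp add: ell_def) presburger

lemma htg_label_in_carrier: "htg_label u \<in> carrier (dihedral n)"
  using n_pos by (auto simp: htg_label_def dihedral_carrier split: prod.splits)

lemma htg_label_mod: "htg_label (a, b mod n') = htg_label (a, b)"
proof -
  define k where "k = b div n'"
  have b: "b = b mod n' + k * n'"
    using mod_div_mult_eq[of b n'] by (simp add: k_def)
  have "(b - a) div 2 = (b mod n' - a) div 2 + k * q"
    by (subst b) (simp add: n'_def algebra_simps)
  moreover have "odd (a + b) \<longleftrightarrow> odd (a + b mod n')"
    by (subst b) (simp add: n'_def)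
  moreover have "[- a * int j - ((b mod n' - a) div 2 + k * q) * int i
      = - a * int j - ((b mod n' - a) div 2) * int i] (mod int n)"
  proof -
    have "- a * int j - ((b mod n' - a) div 2 + k * q) * int i
        = - a * int j - ((b mod n' - a) div 2) * int i + int n * (- k * (int i div m))"
      using q_mult_i by (simp add: algebra_simps flip: mult.assoc)
    then show ?thesis unfolding cong_def by (metis mod_mult_self2 mult.commute)
  qed
  ultimately show ?thesis
    by (simp add: htg_label_def cong_def)
qed

lemma htg_label_mult:
  "htg_label (a, b) \<otimes>\<^bsub>dihedral n\<^esub> (c, True) =
     ((- a * int j - ((b - a) div 2) * int i + (if odd (a + b) then - c else c)) mod int n,
      even (a + b))"
  by (simp add: htg_label_def dihedral_mult mod_add_left_eq)

lemma htg_label_vertical: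
  "htg_label (a, b + 1) = htg_label (a, b) \<otimes>\<^bsub>dihedral n\<^esub> (if even (a + b) then 0 else int i, True)"
proof (cases "even (a + b)")
  case True
  then have "(b + 1 - a) div 2 = (b - a) div 2" by presburger
  with True show ?thesis unfolding htg_label_mult by (simp add: htg_label_def algebra_simps)
next
  case False
  then have "(b + 1 - a) div 2 = (b - a) div 2 + 1" by presburger
  with False show ?thesis unfolding htg_label_mult
    by (simp add: htg_label_def algebra_simps) (rule arg_cong[where f = "\<lambda>x. x mod int n"], linarith)
qed

lemma htg_label_flat:
  assumes "odd (a + b)"
  shows "htg_label (a + 1, b) = htg_label (a, b) \<otimes>\<^bsub>dihedral n\<^esub> (int j, True)"
proof -
  have "(b - (a + 1)) div 2 = (b - a) div 2" using assms by presburger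
  with assms show ?thesis unfolding htg_label_mult by (simp add: htg_label_def algebra_simps)
qed

lemma htg_label_jump:
  assumes "b mod 2 = m mod 2"
  shows "htg_label (0, b + ell) = htg_label (m - 1, b) \<otimes>\<^bsub>dihedral n\<^esub> (int j, True)"
proof -
  have parity: "odd (m - 1 + b)" "even (b + ell)"
    using assms by (simp_all add: ell_def) presburger+
  have "(b - (m - 1)) div 2 = (b - m) div 2" "(b + ell) div 2 = s + (b - m) div 2"
    using assms by (simp_all add: ell_def) presburger+
  then have "- ((b + ell) div 2) * int i
      = (- (m - 1) * int j - ((b - (m - 1)) div 2) * int i - int j) - (s * int i - m * int j)"
    by (simp add: algebra_simps)
  then have "[- ((b + ell) div 2) * int i
      = - (m - 1) * int j - ((b - (m - 1)) div 2) * int i - int j] (mod int n)"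
    using s_mult_i_cong by (simp add: cong_iff_dvd_diff dvd_diff_commute)
  with parity show ?thesis
    unfolding htg_label_mult by (simp add: htg_label_def cong_def)
qed

lemma htg_label_eq_imp_dvd:
  assumes "htg_label (a, b) = htg_label (a', b')"
  shows "m dvd a' - a" and "a = a' \<Longrightarrow> n' dvd b' - b"
proof -
  define t t' where "t = (b - a) div 2" and "t' = (b' - a') div 2"
  have parity: "odd (a + b) \<longleftrightarrow> odd (a' + b')"
    using assms by (simp add: htg_label_def)
  have "[- a * int j - t * int i = - a' * int j - t' * int i] (mod int n)"
    using assms by (simp add: htg_label_def t_def t'_def cong_def)
  then have n_dvd: "int n dvd (a' - a) * int j + (t' - t) * int i"
    by (simp add: cong_iff_dvd_diff algebra_simps)
  then have "m dvd (a' - a) * int j + (t' - t) * int i"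
    using n_eq by (metis dvd_mult_left)
  then have "m dvd (a' - a) * int j"
    using m_dvd_i by (simp add: dvd_add_left_iff)
  then show "m dvd a' - a"
    using coprime_m_j by (simp add: coprime_dvd_mult_left_iff)
  assume "a = a'"
  obtain k where k: "int i = m * k" using m_dvd_i ..
  have "m * q dvd m * ((t' - t) * k)"
    using n_dvd \<open>a = a'\<close> k n_eq by (simp add: algebra_simps)
  then have "q dvd (t' - t) * k"
    using m_pos by simp
  moreover have "k = int i div m" using k m_pos by simp
  ultimately have "q dvd t' - t"
    using coprime_q_i_div_m by (simp add: coprime_dvd_mult_left_iff)
  moreover have "b' - b = 2 * (t' - t)"
    using parity \<open>a = a'\<close> unfolding t_def t'_def by presburger
  ultimately show "n' dvd b' - b"
    unfolding n'_def by (metis mult_dvd_mono dvd_refl)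
qed

lemma inj_on_htg_label: "inj_on htg_label (htg_verts m n')"
proof (rule inj_onI)
  fix u v assume "u \<in> htg_verts m n'" "v \<in> htg_verts m n'" "htg_label u = htg_label v"
  then obtain a b a' b' where uv: "u = (a, b)" "v = (a', b')"
    and ranges: "a \<in> {0..<m}" "a' \<in> {0..<m}" "b \<in> {0..<n'}" "b' \<in> {0..<n'}"
    and eq: "htg_label (a, b) = htg_label (a', b')"
    by (auto simp: htg_verts_def)
  have "a = a'"
    using htg_label_eq_imp_dvd(1)[OF eq] ranges
    by (metis atLeastLessThan_iff mod_eq_dvd_iff mod_pos_pos_trivial)
  moreover from this have "b = b'"
    using htg_label_eq_imp_dvd(2)[OF eq] ranges
    by (metis atLeastLessThan_iff mod_eq_dvd_iff mod_pos_pos_trivial)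
  ultimately show "u = v" using uv by simp
qed

lemma bij_betw_htg_label: "bij_betw htg_label (htg_verts m n') (carrier (dihedral n))"
proof -
  have "card (htg_verts m n') = nat (m * n')"
    using m_pos n'_pos by (simp add: htg_verts_def card_cartesian_product nat_mult_distrib)
  also have "m * n' = int (2 * n)"
    using n_eq by (simp add: n'_def)
  finally have "card (htg_label ` htg_verts m n') = card (carrier (dihedral n))"
    by (simp add: card_image[OF inj_on_htg_label] dihedral_carrier card_cartesian_product)
  moreover have "htg_label ` htg_verts m n' \<subseteq> carrier (dihedral n)"
    using htg_label_in_carrier by blast
  ultimately have "htg_label ` htg_verts m n' = carrier (dihedral n)"
    by (intro card_subset_eq) (simp_all add: dihedral_carrier)
  with inj_on_htg_label show ?thesis
    by (simp add: bij_betw_def)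
qed

abbreviation cayley :: "int \<times> bool \<Rightarrow> int \<times> bool \<Rightarrow> bool" where
  "cayley \<equiv> cayley_adj (dihedral n) (reflections {0, int i, int j})"

lemma cayley_htg_label_iff:
  "cayley (htg_label u) (htg_label v) \<longleftrightarrow>
     (\<exists>c\<in>{0, int i, int j}. htg_label v = htg_label u \<otimes>\<^bsub>dihedral n\<^esub> (c, True))"
  by (simp add: cayley_adj_reflections_iff htg_label_in_carrier)

lemma htg_edge_imp_cayley:
  assumes "htg_edge m n' ell u v"
  shows "cayley (htg_label u) (htg_label v)"
proof -
  obtain a b a' b' where u: "u = (a, b)" and v: "v = (a', b')" by fastforce
  have "(a' = a \<and> b' = (b + 1) mod n')
     \<or> (a \<le> m - 2 \<and> odd (a + b) \<and> a' = a + 1 \<and> b' = b)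
     \<or> (a = m - 1 \<and> b mod 2 = m mod 2 \<and> a' = 0 \<and> b' = (b + ell) mod n')"
    using assms unfolding u v htg_edge_def by simp
  then have "\<exists>c\<in>{0, int i, int j}. htg_label (a', b') = htg_label (a, b) \<otimes>\<^bsub>dihedral n\<^esub> (c, True)"
  proof (elim disjE conjE)
    assume "a' = a" "b' = (b + 1) mod n'"
    then have "htg_label (a', b') = htg_label (a, b)
        \<otimes>\<^bsub>dihedral n\<^esub> (if even (a + b) then 0 else int i, True)"
      by (simp add: htg_label_mod htg_label_vertical)
    then show ?thesis by (cases "even (a + b)") auto
  next
    assume "a \<le> m - 2" "odd (a + b)" "a' = a + 1" "b' = b"
    then show ?thesis using htg_label_flat by blast
  next
    assume "a = m - 1" "b mod 2 = m mod 2" "a' = 0" "b' = (b + ell) mod n'"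
    then show ?thesis using htg_label_jump[of b] by (simp add: htg_label_mod)
  qed
  then show ?thesis
    unfolding cayley_htg_label_iff u v .
qed

lemma htg_adj_imp_cayley: "htg_adj m n' ell u v \<Longrightarrow> cayley (htg_label u) (htg_label v)"
  unfolding htg_adj_def
  using htg_edge_imp_cayley symp_cayley_adj_reflections by (metis sympD)

lemma htg_vertical_neighbour:
  assumes "(a, b) \<in> htg_verts m n'" and "c \<in> {0, int i}"
  shows "\<exists>w\<in>htg_verts m n'. htg_adj m n' ell (a, b) w
           \<and> htg_label w = htg_label (a, b) \<otimes>\<^bsub>dihedral n\<^esub> (c, True)"
proof -
  let ?up = "(a, (b + 1) mod n')" and ?down = "(a, (b - 1) mod n')"
  have "b \<in> {0..<n'}" and nbrs: "?up \<in> htg_verts m n'" "?down \<in> htg_verts m n'"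
    using assms(1) n'_pos by (auto simp: htg_verts_def)
  then have "htg_adj m n' ell (a, b) ?up" "htg_adj m n' ell (a, b) ?down"
    using assms(1) by (auto simp: htg_adj_def htg_edge_def mod_add_left_eq)
  moreover have "htg_label ?up = htg_label (a, b)
      \<otimes>\<^bsub>dihedral n\<^esub> (if even (a + b) then 0 else int i, True)"
    by (simp add: htg_label_mod htg_label_vertical)
  moreover have "htg_label ?down = htg_label (a, b)
      \<otimes>\<^bsub>dihedral n\<^esub> (if odd (a + b) then 0 else int i, True)"
  proof (rule dihedral_reflection_swap)
    show "htg_label (a, b) = htg_label ?down
        \<otimes>\<^bsub>dihedral n\<^esub> (if odd (a + b) then 0 else int i, True)"
      using htg_label_vertical[of a "b - 1"] by (simp add: htg_label_mod)
  qed (rule htg_label_in_carrier)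
  ultimately show ?thesis
    using assms(2) nbrs by (cases "even (a + b)") auto
qed

lemma htg_side_neighbour_odd:
  assumes "(a, b) \<in> htg_verts m n'" and odd: "odd (a + b)"
  shows "\<exists>w\<in>htg_verts m n'. htg_adj m n' ell (a, b) w
           \<and> htg_label w = htg_label (a, b) \<otimes>\<^bsub>dihedral n\<^esub> (int j, True)"
proof -
  consider (flat) "a \<le> m - 2" | (jump) "a = m - 1"
    using assms by (force simp: htg_verts_def)
  then show ?thesis
  proof cases
    case flat
    have "(a + 1, b) \<in> htg_verts m n'"
      using assms flat by (auto simp: htg_verts_def)
    moreover from this have "htg_adj m n' ell (a, b) (a + 1, b)"
      using assms flat odd by (simp add: htg_adj_def htg_edge_def)
    ultimately show ?thesis
      using htg_label_flat[OF odd] by blast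
  next
    case jump
    let ?w = "(0, (b + ell) mod n')"
    have parity: "b mod 2 = m mod 2"
      using odd jump by presburger
    have "?w \<in> htg_verts m n'"
      using m_pos n'_pos by (simp add: htg_verts_def)
    moreover from this have "htg_adj m n' ell (a, b) ?w"
      using assms jump parity by (simp add: htg_adj_def htg_edge_def)
    moreover have "htg_label ?w = htg_label (a, b) \<otimes>\<^bsub>dihedral n\<^esub> (int j, True)"
      using htg_label_jump[OF parity] jump by (simp add: htg_label_mod)
    ultimately show ?thesis by blast
  qed
qed

lemma htg_side_neighbour_even:
  assumes "(a, b) \<in> htg_verts m n'" and even: "even (a + b)"
  shows "\<exists>w\<in>htg_verts m n'. htg_adj m n' ell (a, b) w
           \<and> htg_label w = htg_label (a, b) \<otimes>\<^bsub>dihedral n\<^esub> (int j, True)"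
proof -
  consider (flat) "1 \<le> a" | (jump) "a = 0"
    using assms by (force simp: htg_verts_def)
  then show ?thesis
  proof cases
    case flat
    have odd: "odd (a - 1 + b)"
      using even by presburger
    have "(a - 1, b) \<in> htg_verts m n'"
      using assms flat by (auto simp: htg_verts_def)
    moreover from this have "htg_adj m n' ell (a, b) (a - 1, b)"
      using assms flat odd by (auto simp: htg_adj_def htg_edge_def htg_verts_def)
    moreover have "htg_label (a - 1, b) = htg_label (a, b) \<otimes>\<^bsub>dihedral n\<^esub> (int j, True)"
      using htg_label_flat[OF odd] htg_label_in_carrier by (simp add: dihedral_reflection_swap)
    ultimately show ?thesis by blast
  next
    case jump
    let ?w = "(m - 1, (b - ell) mod n')"
    have parity: "(b - ell) mod 2 = m mod 2"
      using even jump ell_parity by presburger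
    then have "(b - ell) mod n' mod 2 = m mod 2"
      by (simp add: n'_def mod_mod_cancel)
    moreover have "((b - ell) mod n' + ell) mod n' = b"
      using assms by (simp add: htg_verts_def mod_add_left_eq)
    moreover have "?w \<in> htg_verts m n'"
      using m_pos n'_pos by (simp add: htg_verts_def)
    ultimately have "htg_adj m n' ell (a, b) ?w"
      using assms jump by (simp add: htg_adj_def htg_edge_def)
    moreover have "htg_label ?w = htg_label (a, b) \<otimes>\<^bsub>dihedral n\<^esub> (int j, True)"
      using htg_label_jump[OF parity] jump htg_label_in_carrier
      by (simp add: htg_label_mod dihedral_reflection_swap)
    ultimately show ?thesis
      using \<open>?w \<in> htg_verts m n'\<close> by blast
  qed
qed

lemma htg_side_neighbour:
  assumes "(a, b) \<in> htg_verts m n'"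
  shows "\<exists>w\<in>htg_verts m n'. htg_adj m n' ell (a, b) w
           \<and> htg_label w = htg_label (a, b) \<otimes>\<^bsub>dihedral n\<^esub> (int j, True)"
  using htg_side_neighbour_odd[OF assms] htg_side_neighbour_even[OF assms] by blast

lemma cayley_htg_label_iff_htg_adj:
  assumes "u \<in> htg_verts m n'" and "v \<in> htg_verts m n'"
  shows "cayley (htg_label u) (htg_label v) \<longleftrightarrow> htg_adj m n' ell u v"
proof
  assume "cayley (htg_label u) (htg_label v)"
  then obtain c where c: "c \<in> {0, int i, int j}"
    and v: "htg_label v = htg_label u \<otimes>\<^bsub>dihedral n\<^esub> (c, True)"
    by (auto simp: cayley_htg_label_iff)
  obtain w where w: "w \<in> htg_verts m n'" "htg_adj m n' ell u w"
    and "htg_label w = htg_label u \<otimes>\<^bsub>dihedral n\<^esub> (c, True)"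
    using c htg_vertical_neighbour htg_side_neighbour assms(1) by (cases u) blast
  with v have "w = v"
    using inj_on_htg_label assms(2) by (metis inj_onD)
  with w show "htg_adj m n' ell u v" by simp
qed (rule htg_adj_imp_cayley)

lemma graph_iso_cayley_htg:
  "graph_iso (carrier (dihedral n)) cayley (htg_verts m n') (htg_adj m n' ell)"
  using bij_betw_htg_label cayley_htg_label_iff_htg_adj by (rule graph_iso_via_inverse)

end

theorem mainTheorem8:
  fixes n i j :: nat
  assumes "n \<ge> 3" and "0 < i" and "i < j" and "j < n"
  defines "S \<equiv> {dtau, drho [^]\<^bsub>dihedral n\<^esub> i \<otimes>\<^bsub>dihedral n\<^esub> dtau,
                  drho [^]\<^bsub>dihedral n\<^esub> j \<otimes>\<^bsub>dihedral n\<^esub> dtau}"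
  shows "(graph_connected (carrier (dihedral n)) (cayley_adj (dihedral n) S)
            \<longleftrightarrow> gcd n (gcd i j) = 1)
       \<and> (gcd n (gcd i j) = 1 \<longrightarrow>
            (let m = gcd n i in
              \<exists>l::int. l mod 2 = int m mod 2 \<and>
                graph_iso (carrier (dihedral n)) (cayley_adj (dihedral n) S)
                  (htg_verts (int m) (int (2 * n div m)))
                  (htg_adj (int m) (int (2 * n div m)) l)))"
proof (intro conjI impI)
  have S: "S = reflections {0, int i, int j}"
    using assms(3,4) by (simp add: S_def reflections_def dihedral_drho_pow dihedral_mult dtau_def)
  show "graph_connected (carrier (dihedral n)) (cayley_adj (dihedral n) S)
      \<longleftrightarrow> gcd n (gcd i j) = 1"
  proof
    assume "graph_connected (carrier (dihedral n)) (cayley_adj (dihedral n) S)"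
    then have "int (gcd n (gcd i j)) dvd 1"
      unfolding S
    proof (rule reflection_cayley_connected_imp_dvd_one)
      show "1 < n" using assms(1) by simp
    qed (auto intro: dvd_trans)
    then show "gcd n (gcd i j) = 1" by simp
  next
    assume "gcd n (gcd i j) = 1"
    then have "gcd (int n) (gcd (int i) (int j)) = 1"
      by (simp only: gcd_int_int_eq of_nat_1)
    then show "graph_connected (carrier (dihedral n)) (cayley_adj (dihedral n) S)"
      unfolding S using assms(1)
      by (intro reflection_cayley_connected[of n _ "int i" "int j"]) simp_all
  qed
  assume "gcd n (gcd i j) = 1"
  then interpret dihedral_htg n i j
    using assms(1) by unfold_locales simp
  show "let m = gcd n i in
          \<exists>l::int. l mod 2 = int m mod 2 \<and>
            graph_iso (carrier (dihedral n)) (cayley_adj (dihedral n) S)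
              (htg_verts (int m) (int (2 * n div m))) (htg_adj (int m) (int (2 * n div m)) l)"
    using ell_parity graph_iso_cayley_htg by (auto simp: Let_def S m_def n'_eq)
qed

end
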